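(* Let $(M,(I,C),L)$ be a circuit-generating abstract machine with $M$ well-typed of type $\mathtt{bit}^m$ in a context of variables of type $\mathtt{bit}$, and suppose $(M,(I,C),L)\to_{am}(N,(I,C'),L')$. Let $\vec u=(u_i)_{i\in I}$ be a family of booleans. Then one of the following holds: the rewrite step is one eliminating a boolean constant $\mathtt{tt}$ or $\mathtt{ff}$ and $T(M,(I,C),L)(\vec u)$ is equal to $T(N,(I,C'),L')(\vec u)$; or $T(M,(I,C),L)(\vec u)\to T(N,(I,C'),L')(\vec u)$ in one step of the small-step relation; or $N$ contains the term $\mathtt{Err}$.
   Context: **Language $\mathbf{PCF}^{\mathbf{list}}$.** Terms: $M,N,P::= x \mid \lambda x.M \mid MN \mid \langle M,N\rangle \mid \pi_1(M)\mid\pi_2(M)\mid \mathtt{skip}\mid \mathtt{let}\ \mathtt{skip}=M\ \mathtt{in}\ N \mid \mathtt{tt}\mid\mathtt{ff}\mid \mathtt{if}\ M\ \mathtt{then}\ N\ \mathtt{else}\ P \mid \mathtt{and}\mid\mathtt{xor}\mid\mathtt{not}\mid \mathtt{inj}_1(M)\mid\mathtt{inj}_2(M)\mid \mathtt{match}\ P\ \mathtt{with}\ (x\mapsto M\mid y\mapsto N)\mid \mathtt{split}\mid Y(M)\mid \mathtt{Err}$. Types: $A,B::=\mathtt{bit}\mid A\oplus B\mid A\times B\mid \mathbf 1\mid A\to B\mid [A]$. Typing rules (context $\Delta$): $\Delta,x:A\vdash x:A$; $\mathtt{tt},\mathtt{ff}:\mathtt{bit}$; $\mathtt{skip}:\mathbf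 1$; $\mathtt{Err}:A$ for any $A$; $\mathtt{not}:\mathtt{bit}\to\mathtt{bit}$; $\mathtt{and},\mathtt{xor}:\mathtt{bit}\times\mathtt{bit}\to\mathtt{bit}$; $\mathtt{split}:[A]\to\mathbf 1\oplus(A\times[A])$; the usual rules for $\lambda$, application, pairs, projections, injections, $\mathtt{let}\ \mathtt{skip}$, and $\mathtt{match}$; if $\Delta\vdash M:\mathbf 1\oplus(A\times[A])$ then $\Delta\vdash M:[A]$; if $\Delta\vdash M:A\to A$ then $\Delta\vdash Y(M):A$; $\mathtt{if}\ P\ \mathtt{then}\ M\ \mathtt{else}\ N : C$ when $P:\mathtt{bit}$, $M,N:C$ and $C$ is first-order ($C::=\mathtt{bit}\mid C\times C\mid [C]$). Notation: $[M_1,\ldots,M_n]=\mathtt{inj}_2\langle M_1,\cdots\mathtt{inj}_2\langle M_n,\mathtt{inj}_1(\mathtt{skip})\rangle\rangle$, $\langle M_1,\ldots,M_n\rangle=\langle M_1,\langle\ldots,M_n\rangle\rangle$, $\mathtt{bit}^m$ the $m$-fold right-nested product of $\mathtt{bit}$. **Small-step semantics $\to$:** the smallest relation closed under arbitrary subterm contexts containing $(\lambda x.M)N\to M[N/x]$; $\pi_i\langle M_1,M_2\rangle\to M_i$; $\mathtt{let}\ \mathtt{skip}=\mathtt{skip}\ \mathtt{in}\ M\to M$; $\mathtt{if}\ \mathtt{tt}\ \mathtt{then}\ M\ \mathtt{else}\ N\to M$; $\mathtt{if}\ \mathtt{ff}\ \mathtt{then}\ M\ \mathtt{else}\ N\to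 N$; $\mathtt{split}\,M\to M$; $\mathtt{match}\ \mathtt{inj}_i(P)\ \mathtt{with}\ (x_1\mapsto M_1\mid x_2\mapsto M_2)\to M_i[P/x_i]$; $Y(M)\to M(Y(M))$; and the evident rules computing $\mathtt{not},\mathtt{and},\mathtt{xor}$ on the constants $\mathtt{tt},\mathtt{ff}$. $\mathtt{Err}$ does not reduce. **Reversible circuits.** A gate is $\mathrm{cnot}_i(b_1^{j_1}\ldots b_r^{j_r})$ with $i,j_1,\ldots,j_r$ natural numbers, $i\neq j_k$, $b_k$ booleans (written $\mathrm{not}_i$ if $r=0$); $\mathrm{wires}(C)$ is the set of all indices occurring in the gates of a list $C$. A circuit is $(I,C,O)$ with $C$ a list of gates and $I,O$ sets of wires. Executing $\mathrm{cnot}_i(b_1^{j_1}\ldots b_r^{j_r})$ on a valuation $v$ gives $w$ with $w_l=v_l$ for $l\neq i$ and $w_i=v_i\ \mathtt{xor}\ \bigwedge_{k}(v_{j_k}\ \mathtt{xor}\ b_k\ \mathtt{xor}\ \mathtt{tt})$ ($w_i=\mathtt{not}(v_i)$ if $r=0$). Executing $(I,C,O)$ on $(x_i)_{i\in I}$: set $v_k=x_k$ for $k\in I$ and $v_k=\mathtt{ff}$ otherwise, execute the gates of $C$ in reverse list order, return $(v_k)_{k\in O}$. **Abstract machines.** A circuit-generating abstract machine is $(M,(I,C),L)$ with $p_1:\mathtt{bit},\ldots,p_{n+k}:\mathtt{bit}\vdash M:\mathtt{bit}^m$, $I=\{1,\ldots,n\}$, $C$ a list of gates, $L$ a one-to-one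 map from the free variables of $M$ onto wires in $\mathrm{wires}(C)\cup I$. A first-order extension of $L$ is a term built from variables in the domain of $L$ using tuples and list literals; two have the same shape if both are tuples of equal size or lists of equal length with componentwise same shape. Beta-contexts $E[-]$ are one-hole contexts with the hole in any immediate subterm position of any constructor. $\to_{am}$: $(E[R],RC,L)\to_{am}(E[R'],RC,L)$ for $(\lambda x.M)N\mapsto M[N/x]$, $\pi_i\langle M_1,M_2\rangle\mapsto M_i$, $\mathtt{let}\ \mathtt{skip}=\mathtt{skip}\ \mathtt{in}\ M\mapsto M$, $\mathtt{split}\,M\mapsto M$, $\mathtt{match}\ \mathtt{inj}_i(P)\ldots\mapsto M_i[P/x_i]$, $Y(M)\mapsto M(Y(M))$; and the boolean rules, with $i_0$ a new wire, $p_{i_0}$ fresh, $L'=L\cup\{p_{i_0}\mapsto i_0\}$, $G::(I,C)=(I,G::C)$: $(E[\mathtt{ff}],RC,L)\to_{am}(E[p_{i_0}],RC,L')$; $(E[\mathtt{tt}],RC,L)\to_{am}(E[p_{i_0}],\mathrm{not}_{i_0}::RC,L')$; $(E[\mathtt{not}\ p_i],RC,L)\to_{am}(E[p_{i_0}],\mathrm{cnot}_{i_0}(\mathtt{ff}^{L(p_i)})::RC,L')$; $(E[\mathtt{and}\ p_i\ p_j],RC,L)\to_{am}(E[p_{i_0}],\mathrm{cnot}_{i_0}(\mathtt{tt}^{L(p_i)}\mathtt{tt}^{L(p_j)})::RC,L')$; $(E[\mathtt{xor}\ p_i\ p_j],RC,L)\to_{am}(E[p_{i_0}],\mathrm{cnot}_{i_0}(\mathtt{tt}^{L(p_i)})::\mathrm{cnot}_{i_0}(\mathtt{tt}^{L(p_j)})::RC,L')$;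 and for first-order extensions $V,W$ of $L$ of the same shape, $(E[\mathtt{if}\ p_i\ \mathtt{then}\ V\ \mathtt{else}\ W],RC,L)\to_{am}(E[U],RC',L'')$ where $U$ has the same shape with fresh pairwise-distinct variables $u_1,\ldots,u_r$ mapped by $L''\supseteq L$ to new distinct wires, and, with $v_j,w_j$ the corresponding variables of $V,W$, $RC'$ is $RC$ extended with the gates $\mathrm{cnot}_{u_j}(\mathtt{tt}^{p_i}\mathtt{tt}^{v_j})$ and $\mathrm{cnot}_{u_j}(\mathtt{ff}^{p_i}\mathtt{tt}^{w_j})$ (variables standing for their wires); if $V,W$ do not have the same shape it steps to $E[\mathtt{Err}]$. **Readback.** For $(M,(I,C),L)$ and $\vec u=(u_i)_{i\in I}$, let $v$ be the final valuation from executing $(I,C,\mathrm{Range}(L))$ on $\vec u$; $T(M,(I,C),L)(\vec u)$ is $M$ with each free variable $x$ replaced by the boolean constant $v_{L(x)}$. *)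

theory Defs
  imports Main
begin

section \<open>Syntax of PCF-list (locally de Bruijn: bound variables are indices, free variables p_i are FVar i)\<close>

datatype ty = TBit | TSum ty ty | TProd ty ty | TUnit | TArrow ty ty | TList ty

datatype tm =
    Var nat
  | FVar nat
  | Lam tm
  | App tm tm
  | Pair tm tm
  | Proj1 tm
  | Proj2 tm
  | Skip
  | LetSkip tm tm
  | Tt
  | Ff
  | If tm tm tm
  | And
  | Xor
  | Not
  | Inj1 tm
  | Inj2 tm
  | Match tm tm tm     \<comment> \<open>match P with (x |-> M | y |-> N); each branch binds index 0\<close>
  | Split
  | Y tm
  | Err

fun bconst :: "bool \<Rightarrow> tm" where
  "bconst True = Tt"
| "bconst False = Ff"

fun bitpow :: "nat \<Rightarrow> ty" where
  "bitpow 0 = TUnit"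
| "bitpow (Suc 0) = TBit"
| "bitpow (Suc (Suc m)) = TProd TBit (bitpow (Suc m))"

inductive first_order :: "ty \<Rightarrow> bool" where
  "first_order TBit"
| "first_order A \<Longrightarrow> first_order B \<Longrightarrow> first_order (TProd A B)"
| "first_order A \<Longrightarrow> first_order (TList A)"

inductive typing :: "(nat \<Rightarrow> ty option) \<Rightarrow> ty list \<Rightarrow> tm \<Rightarrow> ty \<Rightarrow> bool" where
  t_var: "i < length \<Gamma> \<Longrightarrow> typing \<Delta> \<Gamma> (Var i) (\<Gamma> ! i)"
| t_fvar: "\<Delta> x = Some A \<Longrightarrow> typing \<Delta> \<Gamma> (FVar x) A"
| t_lam: "typing \<Delta> (A # \<Gamma>) M B \<Longrightarrow> typing \<Delta> \<Gamma> (Lam M) (TArrow A B)"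
| t_app: "typing \<Delta> \<Gamma> M (TArrow A B) \<Longrightarrow> typing \<Delta> \<Gamma> N A \<Longrightarrow> typing \<Delta> \<Gamma> (App M N) B"
| t_pair: "typing \<Delta> \<Gamma> M A \<Longrightarrow> typing \<Delta> \<Gamma> N B \<Longrightarrow> typing \<Delta> \<Gamma> (Pair M N) (TProd A B)"
| t_proj1: "typing \<Delta> \<Gamma> M (TProd A B) \<Longrightarrow> typing \<Delta> \<Gamma> (Proj1 M) A"
| t_proj2: "typing \<Delta> \<Gamma> M (TProd A B) \<Longrightarrow> typing \<Delta> \<Gamma> (Proj2 M) B"
| t_skip: "typing \<Delta> \<Gamma> Skip TUnit"
| t_letskip: "typing \<Delta> \<Gamma> M TUnit \<Longrightarrow> typing \<Delta> \<Gamma> N A \<Longrightarrow> typing \<Delta> \<Gamma> (LetSkip M N) A"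
| t_tt: "typing \<Delta> \<Gamma> Tt TBit"
| t_ff: "typing \<Delta> \<Gamma> Ff TBit"
| t_if: "typing \<Delta> \<Gamma> P TBit \<Longrightarrow> typing \<Delta> \<Gamma> M C \<Longrightarrow> typing \<Delta> \<Gamma> N C \<Longrightarrow> first_order C
         \<Longrightarrow> typing \<Delta> \<Gamma> (If P M N) C"
| t_and: "typing \<Delta> \<Gamma> And (TArrow (TProd TBit TBit) TBit)"
| t_xor: "typing \<Delta> \<Gamma> Xor (TArrow (TProd TBit TBit) TBit)"
| t_not: "typing \<Delta> \<Gamma> Not (TArrow TBit TBit)"
| t_inj1: "typing \<Delta> \<Gamma> M A \<Longrightarrow> typing \<Delta> \<Gamma> (Inj1 M) (TSum A B)"
| t_inj2: "typing \<Delta> \<Gamma> M B \<Longrightarrow> typing \<Delta> \<Gamma> (Inj2 M) (TSum A B)"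
| t_match: "typing \<Delta> \<Gamma> P (TSum A B) \<Longrightarrow> typing \<Delta> (A # \<Gamma>) M C \<Longrightarrow> typing \<Delta> (B # \<Gamma>) N C
         \<Longrightarrow> typing \<Delta> \<Gamma> (Match P M N) C"
| t_split: "typing \<Delta> \<Gamma> Split (TArrow (TList A) (TSum TUnit (TProd A (TList A))))"
| t_fold: "typing \<Delta> \<Gamma> M (TSum TUnit (TProd A (TList A))) \<Longrightarrow> typing \<Delta> \<Gamma> M (TList A)"
| t_Y: "typing \<Delta> \<Gamma> M (TArrow A A) \<Longrightarrow> typing \<Delta> \<Gamma> (Y M) A"
| t_err: "typing \<Delta> \<Gamma> Err A"

fun lift :: "nat \<Rightarrow> tm \<Rightarrow> tm" where
  "lift k (Var i) = (if i < k then Var i else Var (Suc i))"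
| "lift k (FVar x) = FVar x"
| "lift k (Lam M) = Lam (lift (Suc k) M)"
| "lift k (App M N) = App (lift k M) (lift k N)"
| "lift k (Pair M N) = Pair (lift k M) (lift k N)"
| "lift k (Proj1 M) = Proj1 (lift k M)"
| "lift k (Proj2 M) = Proj2 (lift k M)"
| "lift k Skip = Skip"
| "lift k (LetSkip M N) = LetSkip (lift k M) (lift k N)"
| "lift k Tt = Tt"
| "lift k Ff = Ff"
| "lift k (If P M N) = If (lift k P) (lift k M) (lift k N)"
| "lift k And = And"
| "lift k Xor = Xor"
| "lift k Not = Not"
| "lift k (Inj1 M) = Inj1 (lift k M)"
| "lift k (Inj2 M) = Inj2 (lift k M)"
| "lift k (Match P M N) = Match (lift k P) (lift (Suc k) M) (lift (Suc k) N)"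
| "lift k Split = Split"
| "lift k (Y M) = Y (lift k M)"
| "lift k Err = Err"

fun subst :: "tm \<Rightarrow> nat \<Rightarrow> tm \<Rightarrow> tm" where
  "subst (Var i) k S = (if i < k then Var i else if i = k then S else Var (i - 1))"
| "subst (FVar x) k S = FVar x"
| "subst (Lam M) k S = Lam (subst M (Suc k) (lift 0 S))"
| "subst (App M N) k S = App (subst M k S) (subst N k S)"
| "subst (Pair M N) k S = Pair (subst M k S) (subst N k S)"
| "subst (Proj1 M) k S = Proj1 (subst M k S)"
| "subst (Proj2 M) k S = Proj2 (subst M k S)"
| "subst Skip k S = Skip"
| "subst (LetSkip M N) k S = LetSkip (subst M k S) (subst N k S)"
| "subst Tt k S = Tt"
| "subst Ff k S = Ff"
| "subst (If P M N) k S = If (subst P k S) (subst M k S) (subst N k S)"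
| "subst And k S = And"
| "subst Xor k S = Xor"
| "subst Not k S = Not"
| "subst (Inj1 M) k S = Inj1 (subst M k S)"
| "subst (Inj2 M) k S = Inj2 (subst M k S)"
| "subst (Match P M N) k S = Match (subst P k S) (subst M (Suc k) (lift 0 S)) (subst N (Suc k) (lift 0 S))"
| "subst Split k S = Split"
| "subst (Y M) k S = Y (subst M k S)"
| "subst Err k S = Err"

fun leaves :: "tm \<Rightarrow> nat list" where
  "leaves (Var i) = []"
| "leaves (FVar x) = [x]"
| "leaves (Lam M) = leaves M"
| "leaves (App M N) = leaves M @ leaves N"
| "leaves (Pair M N) = leaves M @ leaves N"
| "leaves (Proj1 M) = leaves M"
| "leaves (Proj2 M) = leaves M"
| "leaves Skip = []"
| "leaves (LetSkip M N) = leaves M @ leaves N"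
| "leaves Tt = []"
| "leaves Ff = []"
| "leaves (If P M N) = leaves P @ leaves M @ leaves N"
| "leaves And = []"
| "leaves Xor = []"
| "leaves Not = []"
| "leaves (Inj1 M) = leaves M"
| "leaves (Inj2 M) = leaves M"
| "leaves (Match P M N) = leaves P @ leaves M @ leaves N"
| "leaves Split = []"
| "leaves (Y M) = leaves M"
| "leaves Err = []"

definition fvs :: "tm \<Rightarrow> nat set" where
  "fvs M = set (leaves M)"

fun fsubst :: "(nat \<Rightarrow> tm) \<Rightarrow> tm \<Rightarrow> tm" where
  "fsubst f (Var i) = Var i"
| "fsubst f (FVar x) = f x"
| "fsubst f (Lam M) = Lam (fsubst f M)"
| "fsubst f (App M N) = App (fsubst f M) (fsubst f N)"
| "fsubst f (Pair M N) = Pair (fsubst f M) (fsubst f N)"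
| "fsubst f (Proj1 M) = Proj1 (fsubst f M)"
| "fsubst f (Proj2 M) = Proj2 (fsubst f M)"
| "fsubst f Skip = Skip"
| "fsubst f (LetSkip M N) = LetSkip (fsubst f M) (fsubst f N)"
| "fsubst f Tt = Tt"
| "fsubst f Ff = Ff"
| "fsubst f (If P M N) = If (fsubst f P) (fsubst f M) (fsubst f N)"
| "fsubst f And = And"
| "fsubst f Xor = Xor"
| "fsubst f Not = Not"
| "fsubst f (Inj1 M) = Inj1 (fsubst f M)"
| "fsubst f (Inj2 M) = Inj2 (fsubst f M)"
| "fsubst f (Match P M N) = Match (fsubst f P) (fsubst f M) (fsubst f N)"
| "fsubst f Split = Split"
| "fsubst f (Y M) = Y (fsubst f M)"
| "fsubst f Err = Err"

definition skel :: "tm \<Rightarrow> tm" where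
  "skel M = fsubst (\<lambda>_. FVar 0) M"

inductive has_err :: "tm \<Rightarrow> bool" where
  "has_err Err"
| "has_err M \<Longrightarrow> has_err (Lam M)"
| "has_err M \<or> has_err N \<Longrightarrow> has_err (App M N)"
| "has_err M \<or> has_err N \<Longrightarrow> has_err (Pair M N)"
| "has_err M \<Longrightarrow> has_err (Proj1 M)"
| "has_err M \<Longrightarrow> has_err (Proj2 M)"
| "has_err M \<or> has_err N \<Longrightarrow> has_err (LetSkip M N)"
| "has_err P \<or> has_err M \<or> has_err N \<Longrightarrow> has_err (If P M N)"
| "has_err M \<Longrightarrow> has_err (Inj1 M)"
| "has_err M \<Longrightarrow> has_err (Inj2 M)"
| "has_err P \<or> has_err M \<or> has_err N \<Longrightarrow> has_err (Match P M N)"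
| "has_err M \<Longrightarrow> has_err (Y M)"

datatype ctx =
    Hole
  | CLam ctx
  | CAppL ctx tm | CAppR tm ctx
  | CPairL ctx tm | CPairR tm ctx
  | CProj1 ctx | CProj2 ctx
  | CLetL ctx tm | CLetR tm ctx
  | CIf1 ctx tm tm | CIf2 tm ctx tm | CIf3 tm tm ctx
  | CInj1 ctx | CInj2 ctx
  | CMatch1 ctx tm tm | CMatch2 tm ctx tm | CMatch3 tm tm ctx
  | CY ctx

fun plug :: "ctx \<Rightarrow> tm \<Rightarrow> tm" where
  "plug Hole R = R"
| "plug (CLam E) R = Lam (plug E R)"
| "plug (CAppL E N) R = App (plug E R) N"
| "plug (CAppR M E) R = App M (plug E R)"
| "plug (CPairL E N) R = Pair (plug E R) N"
| "plug (CPairR M E) R = Pair M (plug E R)"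
| "plug (CProj1 E) R = Proj1 (plug E R)"
| "plug (CProj2 E) R = Proj2 (plug E R)"
| "plug (CLetL E N) R = LetSkip (plug E R) N"
| "plug (CLetR M E) R = LetSkip M (plug E R)"
| "plug (CIf1 E M N) R = If (plug E R) M N"
| "plug (CIf2 P E N) R = If P (plug E R) N"
| "plug (CIf3 P M E) R = If P M (plug E R)"
| "plug (CInj1 E) R = Inj1 (plug E R)"
| "plug (CInj2 E) R = Inj2 (plug E R)"
| "plug (CMatch1 E M N) R = Match (plug E R) M N"
| "plug (CMatch2 P E N) R = Match P (plug E R) N"
| "plug (CMatch3 P M E) R = Match P M (plug E R)"
| "plug (CY E) R = Y (plug E R)"

text \<open>Redexes shared by the small-step semantics and the abstract machine\<close>
inductive pure_redex :: "tm \<Rightarrow> tm \<Rightarrow> bool" where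
  "pure_redex (App (Lam M) N) (subst M 0 N)"
| "pure_redex (Proj1 (Pair M1 M2)) M1"
| "pure_redex (Proj2 (Pair M1 M2)) M2"
| "pure_redex (LetSkip Skip M) M"
| "pure_redex (App Split M) M"
| "pure_redex (Match (Inj1 P) M1 M2) (subst M1 0 P)"
| "pure_redex (Match (Inj2 P) M1 M2) (subst M2 0 P)"
| "pure_redex (Y M) (App M (Y M))"

inductive redex :: "tm \<Rightarrow> tm \<Rightarrow> bool" where
  "pure_redex R R' \<Longrightarrow> redex R R'"
| "redex (If Tt M N) M"
| "redex (If Ff M N) N"
| "redex (App Not (bconst a)) (bconst (\<not> a))"
| "redex (App And (Pair (bconst a) (bconst b))) (bconst (a \<and> b))"
| "redex (App Xor (Pair (bconst a) (bconst b))) (bconst (a \<noteq> b))"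

inductive step :: "tm \<Rightarrow> tm \<Rightarrow> bool" where
  "redex R R' \<Longrightarrow> step (plug E R) (plug E R')"

text \<open>Gate target [(b_1, j_1), ..., (b_r, j_r)] is cnot_target(b_1^{j_1} ... b_r^{j_r})\<close>
datatype gate = Gate nat "(bool \<times> nat) list"

fun wf_gate :: "gate \<Rightarrow> bool" where
  "wf_gate (Gate i cs) = (\<forall>(b, j) \<in> set cs. i \<noteq> j)"

fun gate_wires :: "gate \<Rightarrow> nat set" where
  "gate_wires (Gate i cs) = insert i (snd ` set cs)"

definition wires :: "gate list \<Rightarrow> nat set" where
  "wires C = (\<Union>g \<in> set C. gate_wires g)"

fun exec_gate :: "gate \<Rightarrow> (nat \<Rightarrow> bool) \<Rightarrow> (nat \<Rightarrow> bool)" where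
  "exec_gate (Gate i cs) v =
     v(i := (v i \<noteq> (\<forall>(b, j) \<in> set cs. ((v j \<noteq> b) \<noteq> True))))"

text \<open>Execute the gates of C in reverse list order (last element first)\<close>
definition exec_gates :: "gate list \<Rightarrow> (nat \<Rightarrow> bool) \<Rightarrow> (nat \<Rightarrow> bool)" where
  "exec_gates C v = foldr exec_gate C v"

definition final_val :: "nat \<Rightarrow> gate list \<Rightarrow> (nat \<Rightarrow> bool) \<Rightarrow> (nat \<Rightarrow> bool)" where
  "final_val n C u = exec_gates C (\<lambda>k. if k \<in> {1..n} then u k else False)"

section \<open>Circuit-generating abstract machine, I = {1..n}\<close>

definition new_wire :: "nat \<Rightarrow> gate list \<Rightarrow> (nat \<rightharpoonup> nat) \<Rightarrow> nat \<Rightarrow> bool" where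
  "new_wire n C L i = (i \<notin> wires C \<and> i \<notin> {1..n} \<and> i \<notin> ran L)"

text \<open>First-order extensions of L: variables of dom L, tuples (nested pairs) and list literals\<close>
inductive fo_ext :: "(nat \<rightharpoonup> nat) \<Rightarrow> tm \<Rightarrow> bool" and fo_list :: "(nat \<rightharpoonup> nat) \<Rightarrow> tm \<Rightarrow> bool" where
  "x \<in> dom L \<Longrightarrow> fo_ext L (FVar x)"
| "fo_ext L V \<Longrightarrow> fo_ext L W \<Longrightarrow> fo_ext L (Pair V W)"
| "fo_list L V \<Longrightarrow> fo_ext L V"
| "fo_list L (Inj1 Skip)"
| "fo_ext L V \<Longrightarrow> fo_list L W \<Longrightarrow> fo_list L (Inj2 (Pair V W))"

definition same_shape :: "tm \<Rightarrow> tm \<Rightarrow> bool" where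
  "same_shape V W = (skel V = skel W)"

datatype step_kind = ConstElim | OtherStep

type_synonym am_state = "tm \<times> gate list \<times> (nat \<rightharpoonup> nat)"

inductive am_redex :: "nat \<Rightarrow> am_state \<Rightarrow> step_kind \<Rightarrow> am_state \<Rightarrow> bool" where
  am_pure: "pure_redex R R' \<Longrightarrow> am_redex n (R, C, L) OtherStep (R', C, L)"
| am_ff: "new_wire n C L i0 \<Longrightarrow> i0 \<notin> dom L \<Longrightarrow>
     am_redex n (Ff, C, L) ConstElim (FVar i0, C, L(i0 \<mapsto> i0))"
| am_tt: "new_wire n C L i0 \<Longrightarrow> i0 \<notin> dom L \<Longrightarrow>
     am_redex n (Tt, C, L) ConstElim (FVar i0, Gate i0 [] # C, L(i0 \<mapsto> i0))"
| am_not: "new_wire n C L i0 \<Longrightarrow> i0 \<notin> dom L \<Longrightarrow> L x = Some a \<Longrightarrow>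
     am_redex n (App Not (FVar x), C, L) OtherStep
       (FVar i0, Gate i0 [(False, a)] # C, L(i0 \<mapsto> i0))"
| am_and: "new_wire n C L i0 \<Longrightarrow> i0 \<notin> dom L \<Longrightarrow> L x = Some a \<Longrightarrow> L y = Some b \<Longrightarrow>
     am_redex n (App And (Pair (FVar x) (FVar y)), C, L) OtherStep
       (FVar i0, Gate i0 [(True, a), (True, b)] # C, L(i0 \<mapsto> i0))"
| am_xor: "new_wire n C L i0 \<Longrightarrow> i0 \<notin> dom L \<Longrightarrow> L x = Some a \<Longrightarrow> L y = Some b \<Longrightarrow>
     am_redex n (App Xor (Pair (FVar x) (FVar y)), C, L) OtherStep
       (FVar i0, Gate i0 [(True, a)] # Gate i0 [(True, b)] # C, L(i0 \<mapsto> i0))"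
| am_if: "L x = Some a \<Longrightarrow> fo_ext L V \<Longrightarrow> fo_ext L W \<Longrightarrow> same_shape V W \<Longrightarrow>
     skel U = skel V \<Longrightarrow> leaves U = us \<Longrightarrow> distinct us \<Longrightarrow> set us \<inter> dom L = {} \<Longrightarrow>
     length ws = length us \<Longrightarrow> distinct ws \<Longrightarrow> (\<forall>w \<in> set ws. new_wire n C L w) \<Longrightarrow>
     C' = concat (map (\<lambda>(w, vj, wj). [Gate w [(True, a), (True, the (L vj))],
                                       Gate w [(False, a), (True, the (L wj))]])
                   (zip ws (zip (leaves V) (leaves W)))) @ C \<Longrightarrow>
     am_redex n (If (FVar x) V W, C, L) OtherStep (U, C', L ++ map_of (zip us ws))"
| am_if_err: "L x = Some a \<Longrightarrow> fo_ext L V \<Longrightarrow> fo_ext L W \<Longrightarrow> \<not> same_shape V W \<Longrightarrow>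
     am_redex n (If (FVar x) V W, C, L) OtherStep (Err, C, L)"

inductive am_step :: "nat \<Rightarrow> am_state \<Rightarrow> step_kind \<Rightarrow> am_state \<Rightarrow> bool" where
  "am_redex n (R, C, L) k (R', C', L') \<Longrightarrow> am_step n (plug E R, C, L) k (plug E R', C', L')"

definition is_machine :: "nat \<Rightarrow> nat \<Rightarrow> nat \<Rightarrow> tm \<Rightarrow> gate list \<Rightarrow> (nat \<rightharpoonup> nat) \<Rightarrow> bool" where
  "is_machine n k m M C L \<longleftrightarrow>
     1 \<le> m \<and>
     typing (\<lambda>x. if x \<in> {1..n+k} then Some TBit else None) [] M (bitpow m) \<and>
     (\<forall>g \<in> set C. wf_gate g) \<and>
     dom L = fvs M \<and> inj_on L (dom L) \<and> ran L \<subseteq> wires C \<union> {1..n}"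

definition readback :: "nat \<Rightarrow> gate list \<Rightarrow> (nat \<rightharpoonup> nat) \<Rightarrow> tm \<Rightarrow> (nat \<Rightarrow> bool) \<Rightarrow> tm" where
  "readback n C L M u =
     (let v = final_val n C u in
      fsubst (\<lambda>x. case L x of Some w \<Rightarrow> bconst (v w) | None \<Rightarrow> FVar x) M)"

end

theory Submission
  imports Defs
begin

text \<open>Readback substitutes for each free variable the boolean carried by its wire. This
substitution commutes with de Bruijn lifting and substitution and with plugging into contexts,
and the machine only adds gates targeting fresh wires, so the variables of the context keep
their values and it suffices to compare a machine redex with its readback. A constant becomes
a fresh wire carrying the same constant; the gates emitted for \<open>not\<close>, \<open>and\<close> and \<open>xor\<close>
compute on the fresh wire exactly the boolean of the small-step rule; and for a conditional on
first-order data each pair of controlled nots makes a fresh wire a multiplexer that copies the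
corresponding wire of the chosen branch.\<close>

lemma lift_bconst [simp]: "lift k (bconst b) = bconst b"
  by (cases b) auto

lemma subst_bconst [simp]: "subst (bconst b) k S = bconst b"
  by (cases b) auto

lemma fsubst_bconst [simp]: "fsubst f (bconst b) = bconst b"
  by (cases b) auto

lemma fsubst_lift:
  assumes "\<And>x k. lift k (f x) = f x"
  shows "fsubst f (lift k M) = lift k (fsubst f M)"
  by (induction M arbitrary: k) (simp_all add: assms)

lemma fsubst_subst:
  assumes "\<And>x k. lift k (f x) = f x" and "\<And>x k S. subst (f x) k S = f x"
  shows "fsubst f (subst M k S) = subst (fsubst f M) k (fsubst f S)"
  by (induction M arbitrary: k S) (simp_all add: assms fsubst_lift)

lemma pure_redex_fsubst:
  assumes "pure_redex R R'"
    and "\<And>x k. lift k (f x) = f x" and "\<And>x k S. subst (f x) k S = f x"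
  shows "pure_redex (fsubst f R) (fsubst f R')"
  using assms(1)
  by cases (auto simp: fsubst_subst[OF assms(2,3)] intro: pure_redex.intros)

lemma redex_If_bconst: "redex (If (bconst b) M N) (if b then M else N)"
  by (cases b) (auto intro: redex.intros)

lemma fsubst_cong: "(\<And>x. x \<in> set (leaves M) \<Longrightarrow> f x = g x) \<Longrightarrow> fsubst f M = fsubst g M"
  by (induction M) auto

lemma length_leaves_skel: "length (leaves (skel M)) = length (leaves M)"
  unfolding skel_def by (induction M) auto

lemma skel_eq_length_leaves: "skel A = skel B \<Longrightarrow> length (leaves A) = length (leaves B)"
  by (metis length_leaves_skel)

lemma fsubst_eq_if_skel_eq:
  "skel A = skel B \<Longrightarrow> list_all2 (\<lambda>x y. f x = g y) (leaves A) (leaves B)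
   \<Longrightarrow> fsubst f A = fsubst g B"
proof (induction A arbitrary: B)
qed (case_tac B; auto simp: skel_def list_all2_append dest!: skel_eq_length_leaves[unfolded skel_def])+

lemma fo_ext_leaves:
  "fo_ext L V \<Longrightarrow> set (leaves V) \<subseteq> dom L"
  "fo_list L W \<Longrightarrow> set (leaves W) \<subseteq> dom L"
  by (induction rule: fo_ext_fo_list.inducts) auto

fun cleaves :: "ctx \<Rightarrow> nat list" where
  "cleaves Hole = []"
| "cleaves (CLam E) = cleaves E"
| "cleaves (CAppL E N) = cleaves E @ leaves N"
| "cleaves (CAppR M E) = leaves M @ cleaves E"
| "cleaves (CPairL E N) = cleaves E @ leaves N"
| "cleaves (CPairR M E) = leaves M @ cleaves E"
| "cleaves (CProj1 E) = cleaves E"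
| "cleaves (CProj2 E) = cleaves E"
| "cleaves (CLetL E N) = cleaves E @ leaves N"
| "cleaves (CLetR M E) = leaves M @ cleaves E"
| "cleaves (CIf1 E M N) = cleaves E @ leaves M @ leaves N"
| "cleaves (CIf2 P E N) = leaves P @ cleaves E @ leaves N"
| "cleaves (CIf3 P M E) = leaves P @ leaves M @ cleaves E"
| "cleaves (CInj1 E) = cleaves E"
| "cleaves (CInj2 E) = cleaves E"
| "cleaves (CMatch1 E M N) = cleaves E @ leaves M @ leaves N"
| "cleaves (CMatch2 P E N) = leaves P @ cleaves E @ leaves N"
| "cleaves (CMatch3 P M E) = leaves P @ leaves M @ cleaves E"
| "cleaves (CY E) = cleaves E"

fun cfsubst :: "(nat \<Rightarrow> tm) \<Rightarrow> ctx \<Rightarrow> ctx" where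
  "cfsubst f Hole = Hole"
| "cfsubst f (CLam E) = CLam (cfsubst f E)"
| "cfsubst f (CAppL E N) = CAppL (cfsubst f E) (fsubst f N)"
| "cfsubst f (CAppR M E) = CAppR (fsubst f M) (cfsubst f E)"
| "cfsubst f (CPairL E N) = CPairL (cfsubst f E) (fsubst f N)"
| "cfsubst f (CPairR M E) = CPairR (fsubst f M) (cfsubst f E)"
| "cfsubst f (CProj1 E) = CProj1 (cfsubst f E)"
| "cfsubst f (CProj2 E) = CProj2 (cfsubst f E)"
| "cfsubst f (CLetL E N) = CLetL (cfsubst f E) (fsubst f N)"
| "cfsubst f (CLetR M E) = CLetR (fsubst f M) (cfsubst f E)"
| "cfsubst f (CIf1 E M N) = CIf1 (cfsubst f E) (fsubst f M) (fsubst f N)"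
| "cfsubst f (CIf2 P E N) = CIf2 (fsubst f P) (cfsubst f E) (fsubst f N)"
| "cfsubst f (CIf3 P M E) = CIf3 (fsubst f P) (fsubst f M) (cfsubst f E)"
| "cfsubst f (CInj1 E) = CInj1 (cfsubst f E)"
| "cfsubst f (CInj2 E) = CInj2 (cfsubst f E)"
| "cfsubst f (CMatch1 E M N) = CMatch1 (cfsubst f E) (fsubst f M) (fsubst f N)"
| "cfsubst f (CMatch2 P E N) = CMatch2 (fsubst f P) (cfsubst f E) (fsubst f N)"
| "cfsubst f (CMatch3 P M E) = CMatch3 (fsubst f P) (fsubst f M) (cfsubst f E)"
| "cfsubst f (CY E) = CY (cfsubst f E)"

lemma set_leaves_plug: "set (leaves (plug E R)) = set (cleaves E) \<union> set (leaves R)"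
  by (induction E) auto

lemma fsubst_plug: "fsubst f (plug E R) = plug (cfsubst f E) (fsubst f R)"
  by (induction E) auto

lemma cfsubst_cong: "(\<And>x. x \<in> set (cleaves E) \<Longrightarrow> f x = g x) \<Longrightarrow> cfsubst f E = cfsubst g E"
  by (induction E) (auto intro: fsubst_cong)

lemma has_err_plug_Err: "has_err (plug E Err)"
  by (induction E) (auto intro: has_err.intros)

fun gate_target :: "gate \<Rightarrow> nat" where
  "gate_target (Gate i cs) = i"

lemma exec_gates_untargeted: "w \<notin> gate_target ` set G \<Longrightarrow> exec_gates G v w = v w"
proof (induction G)
  case (Cons g G)
  then show ?case by (cases g) (simp add: exec_gates_def)
qed (simp add: exec_gates_def)

lemma final_val_append: "final_val n (G @ C) u = exec_gates G (final_val n C u)"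
  by (simp add: final_val_def exec_gates_def)

lemma final_val_Cons: "final_val n (g # C) u = exec_gate g (final_val n C u)"
  by (simp add: final_val_def exec_gates_def)

lemma gate_target_in_gate_wires: "gate_target g \<in> gate_wires g"
  by (cases g) simp

lemma final_val_new_wire: "new_wire n C L i \<Longrightarrow> final_val n C u i = False"
proof -
  assume new: "new_wire n C L i"
  then have "i \<notin> gate_target ` set C"
    using gate_target_in_gate_wires by (fastforce simp: new_wire_def wires_def)
  with new show ?thesis
    by (auto simp: final_val_def exec_gates_untargeted new_wire_def)
qed

text \<open>The gates of rule \<open>am_if\<close>: each triple \<open>(w, p, q)\<close> turns the fresh wire \<open>w\<close> into a
multiplexer selecting wire \<open>g p\<close> or \<open>g q\<close> according to wire \<open>a\<close>.\<close>
definition mux_gates :: "nat \<Rightarrow> (nat \<Rightarrow> nat) \<Rightarrow> (nat \<times> nat \<times> nat) list \<Rightarrow> gate list" where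
  "mux_gates a g ts = concat (map (\<lambda>(w, p, q). [Gate w [(True, a), (True, g p)],
                                                 Gate w [(False, a), (True, g q)]]) ts)"

lemma mux_gates_Cons:
  "mux_gates a g ((w, p, q) # ts) =
     Gate w [(True, a), (True, g p)] # Gate w [(False, a), (True, g q)] # mux_gates a g ts"
  by (simp add: mux_gates_def)

lemma gate_target_mux_gates: "gate_target ` set (mux_gates a g ts) = fst ` set ts"
proof (induction ts)
  case (Cons t ts)
  then show ?case by (cases t) (simp add: mux_gates_Cons)
qed (simp add: mux_gates_def)

lemma exec_mux_gates:
  assumes "distinct (map fst ts)" and "fst ` set ts \<inter> insert a (g ` D) = {}"
    and "\<forall>(w, p, q) \<in> set ts. p \<in> D \<and> q \<in> D" and "(w, p, q) \<in> set ts"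
  shows "exec_gates (mux_gates a g ts) v w = (v w \<noteq> (if v a then v (g p) else v (g q)))"
  using assms
proof (induction ts)
  case (Cons t ts)
  obtain w0 p0 q0 where t: "t = (w0, p0, q0)" by (cases t)
  define r where "r = exec_gates (mux_gates a g ts) v"
  have exec: "exec_gates (mux_gates a g (t # ts)) v =
      exec_gate (Gate w0 [(True, a), (True, g p0)]) (exec_gate (Gate w0 [(False, a), (True, g q0)]) r)"
    by (simp add: t r_def mux_gates_Cons exec_gates_def)
  show ?case
  proof (cases "w = w0")
    case True
    have "w0 \<notin> fst ` set ts" using Cons.prems(1) t by simp
    then have "(w, p, q) \<notin> set ts" using True by (auto intro: rev_image_eqI)
    then have "p = p0" "q = q0" using Cons.prems(4) t by auto
    moreover have "w0 \<noteq> a" "g p0 \<noteq> w0" "g q0 \<noteq> w0" "a \<notin> fst ` set ts"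
      "g p0 \<notin> fst ` set ts" "g q0 \<notin> fst ` set ts"
      using Cons.prems(2,3) t by auto
    ultimately show ?thesis using True \<open>w0 \<notin> fst ` set ts\<close>
      by (simp add: exec r_def exec_gates_untargeted gate_target_mux_gates)
  next
    case False
    with Cons.prems t have "r w = (v w \<noteq> (if v a then v (g p) else v (g q)))"
      unfolding r_def by (intro Cons.IH) auto
    with False show ?thesis unfolding exec by simp
  qed
qed simp

definition read_fvar :: "(nat \<rightharpoonup> nat) \<Rightarrow> (nat \<Rightarrow> bool) \<Rightarrow> nat \<Rightarrow> tm" where
  "read_fvar L v x = (case L x of Some w \<Rightarrow> bconst (v w) | None \<Rightarrow> FVar x)"

lemma readback_eq_fsubst: "readback n C L M u = fsubst (read_fvar L (final_val n C u)) M"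
  by (simp add: readback_def read_fvar_def[abs_def])

lemma lift_read_fvar [simp]: "lift k (read_fvar L v x) = read_fvar L v x"
  by (simp add: read_fvar_def split: option.split)

lemma subst_read_fvar [simp]: "subst (read_fvar L v x) k S = read_fvar L v x"
  by (simp add: read_fvar_def split: option.split)

lemma read_fvar_Some [simp]: "L x = Some w \<Longrightarrow> read_fvar L v x = bconst (v w)"
  by (simp add: read_fvar_def)

lemma read_fvar_agree:
  assumes "L \<subseteq>\<^sub>m L'" and "\<forall>w \<in> ran L. v' w = v w" and "x \<in> dom L"
  shows "read_fvar L' v' x = read_fvar L v x"
proof -
  from assms(3) obtain w where w: "L x = Some w" by blast
  moreover from w assms(1) have "L' x = Some w" by (metis domI map_le_def)
  ultimately show ?thesis using assms(2) by (simp add: read_fvar_def ranI)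
qed

lemma am_redex_map_le:
  assumes "am_redex n (R, C, L) kd (R', C', L')"
  shows "L \<subseteq>\<^sub>m L'"
  using assms
proof cases
  case (am_if x a V W us ws)
  then have "dom L \<inter> dom (map_of (zip us ws)) = {}" by auto
  then show ?thesis using am_if by (metis map_add_comm map_le_map_add)
qed (auto simp: map_le_def)

lemma am_redex_appends_gates:
  assumes "am_redex n (R, C, L) kd (R', C', L')"
  shows "\<exists>G. C' = G @ C \<and> gate_target ` set G \<inter> ran L = {}"
  using assms
proof cases
  case (am_tt i0)
  then show ?thesis by (intro exI[of _ "[Gate i0 []]"]) (auto simp: new_wire_def)
next
  case (am_not i0 x a)
  then show ?thesis by (intro exI[of _ "[Gate i0 [(False, a)]]"]) (auto simp: new_wire_def)
next
  case (am_and i0 x a y b)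
  then show ?thesis
    by (intro exI[of _ "[Gate i0 [(True, a), (True, b)]]"]) (auto simp: new_wire_def)
next
  case (am_xor i0 x a y b)
  then show ?thesis
    by (intro exI[of _ "[Gate i0 [(True, a)], Gate i0 [(True, b)]]"]) (auto simp: new_wire_def)
next
  case (am_if x a V W us ws)
  define ts where "ts = zip ws (zip (leaves V) (leaves W))"
  have "C' = mux_gates a (\<lambda>z. the (L z)) ts @ C"
    using am_if by (simp add: mux_gates_def ts_def)
  moreover have "fst ` set ts \<subseteq> set ws"
    unfolding ts_def by (auto dest: set_zip_leftD)
  ultimately show ?thesis using am_if
    by (intro exI[of _ "mux_gates a (\<lambda>z. the (L z)) ts"])
       (auto simp: gate_target_mux_gates new_wire_def)
qed auto

lemma am_redex_read_fvar:
  assumes "am_redex n (R, C, L) kd (R', C', L')" and "x \<in> dom L"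
  shows "read_fvar L' (final_val n C' u) x = read_fvar L (final_val n C u) x"
proof (rule read_fvar_agree)
  show "L \<subseteq>\<^sub>m L'" using assms(1) by (rule am_redex_map_le)
  from am_redex_appends_gates[OF assms(1)] obtain G
    where "C' = G @ C" and "gate_target ` set G \<inter> ran L = {}" by blast
  then show "\<forall>w\<in>ran L. final_val n C' u w = final_val n C u w"
    by (simp add: final_val_append) (metis disjoint_iff exec_gates_untargeted)
qed (rule assms(2))

lemma readback_mux_gates:
  fixes u :: "nat \<Rightarrow> bool"
  assumes "a \<in> ran L" and VW: "set (leaves V) \<union> set (leaves W) \<subseteq> dom L"
    and "same_shape V W" and "skel U = skel V" and "distinct (leaves U)"
    and "length ws = length (leaves U)" and "distinct ws" and "\<forall>w \<in> set ws. new_wire n C L w"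
  defines "v \<equiv> final_val n C u"
  shows "fsubst (read_fvar (L ++ map_of (zip (leaves U) ws))
           (final_val n (mux_gates a (\<lambda>z. the (L z)) (zip ws (zip (leaves V) (leaves W))) @ C) u)) U
         = fsubst (read_fvar L v) (if v a then V else W)"
    (is "fsubst (read_fvar ?L' ?v') U = fsubst ?f ?B")
proof (rule fsubst_eq_if_skel_eq)
  define g where "g = (\<lambda>z. the (L z))"
  define ts where "ts = zip ws (zip (leaves V) (leaves W))"
  have skel_B: "skel U = skel ?B"
    using assms(3,4) unfolding same_shape_def by simp
  then show "skel U = skel ?B" .
  have len: "length (leaves V) = length ws" "length (leaves W) = length ws"
    using assms(3,6) skel_eq_length_leaves[OF assms(4)] skel_eq_length_leaves[of V W]
    by (simp_all add: same_shape_def)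
  have fresh: "set ws \<inter> ran L = {}" and unset: "\<forall>w \<in> set ws. v w = False"
    using assms(8) final_val_new_wire by (auto simp: new_wire_def v_def)
  have v': "?v' = exec_gates (mux_gates a g ts) v"
    by (simp add: final_val_append g_def ts_def v_def)
  have "map fst ts = ws" using len by (simp add: ts_def)
  then have "distinct (map fst ts)" and "fst ` set ts = set ws"
    using assms(7) by (auto simp flip: set_map)
  moreover have "g ` dom L \<subseteq> ran L" by (auto simp: g_def intro: ranI)
  ultimately have targets: "fst ` set ts \<inter> insert a (g ` dom L) = {}"
    using fresh assms(1) by blast
  have controls: "\<forall>(w, p, q) \<in> set ts. p \<in> dom L \<and> q \<in> dom L"
  proof clarify
    fix w p q assume "(w, p, q) \<in> set ts"
    then have "p \<in> set (leaves V)" "q \<in> set (leaves W)"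
      unfolding ts_def by (meson set_zip_leftD set_zip_rightD)+
    then show "p \<in> dom L \<and> q \<in> dom L" using VW by blast
  qed
  have mux: "?v' (ws ! j) = (if v a then v (g (leaves V ! j)) else v (g (leaves W ! j)))"
    if "j < length ws" for j
  proof -
    have "ts ! j = (ws ! j, leaves V ! j, leaves W ! j)" "j < length ts"
      using that len by (simp_all add: ts_def)
    then have "(ws ! j, leaves V ! j, leaves W ! j) \<in> set ts" by (metis nth_mem)
    then show ?thesis
      unfolding v' using exec_mux_gates[OF \<open>distinct (map fst ts)\<close> targets controls] unset that
      by simp
  qed
  show "list_all2 (\<lambda>x y. read_fvar ?L' ?v' x = ?f y) (leaves U) (leaves ?B)"
  proof (rule list_all2_all_nthI)
    show "length (leaves U) = length (leaves ?B)" using skel_B skel_eq_length_leaves by blast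
    fix j assume "j < length (leaves U)"
    then have j: "j < length ws" using assms(6) by simp
    have "?L' (leaves U ! j) = Some (ws ! j)"
      using j assms(5,6) by (simp add: map_of_zip_nth)
    moreover have "leaves ?B ! j \<in> dom L"
    proof -
      have "set (leaves ?B) \<subseteq> dom L" using VW by simp
      with j len show ?thesis by (simp add: subset_iff)
    qed
    ultimately show "read_fvar ?L' ?v' (leaves U ! j) = ?f (leaves ?B ! j)"
      using mux[OF j] by (auto simp: read_fvar_def g_def)
  qed
qed

lemma am_redex_readback:
  fixes u :: "nat \<Rightarrow> bool"
  assumes "am_redex n (R, C, L) kd (R', C', L')"
  defines "f \<equiv> read_fvar L (final_val n C u)" and "f' \<equiv> read_fvar L' (final_val n C' u)"
  shows "(kd = ConstElim \<and> fsubst f R = fsubst f' R') \<or> redex (fsubst f R) (fsubst f' R') \<or> R' = Err"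
  using assms(1)
proof cases
  case am_pure
  then have "pure_redex (fsubst f R) (fsubst f R')"
    by (intro pure_redex_fsubst) (simp_all add: f_def)
  with am_pure show ?thesis by (simp add: f_def f'_def redex.intros)
next
  case (am_ff i0)
  then show ?thesis by (simp add: f'_def final_val_new_wire)
next
  case (am_tt i0)
  then show ?thesis by (simp add: f'_def final_val_Cons final_val_new_wire)
next
  case (am_not i0 x a)
  then have "a \<noteq> i0" by (auto simp: new_wire_def intro: ranI)
  with am_not have "fsubst f' R' = bconst (\<not> final_val n C u a)"
    by (simp add: f'_def final_val_Cons final_val_new_wire)
  with am_not show ?thesis by (simp add: f_def redex.intros)
next
  case (am_and i0 x a y b)
  then have "a \<noteq> i0" "b \<noteq> i0" by (auto simp: new_wire_def intro: ranI)
  with am_and have "fsubst f' R' = bconst (final_val n C u a \<and> final_val n C u b)"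
    by (simp add: f'_def final_val_Cons final_val_new_wire)
  with am_and show ?thesis by (simp add: f_def redex.intros)
next
  case (am_xor i0 x a y b)
  then have "a \<noteq> i0" "b \<noteq> i0" by (auto simp: new_wire_def intro: ranI)
  with am_xor have "fsubst f' R' = bconst (final_val n C u a \<noteq> final_val n C u b)"
    by (cases "final_val n C u a") (simp_all add: f'_def final_val_Cons final_val_new_wire)
  with am_xor show ?thesis
    using redex.intros(6)[of "final_val n C u a" "final_val n C u b"] by (simp add: f_def)
next
  case (am_if x a V W us ws)
  have "C' = mux_gates a (\<lambda>z. the (L z)) (zip ws (zip (leaves V) (leaves W))) @ C"
    and "L' = L ++ map_of (zip (leaves R') ws)"
    using am_if by (simp_all add: mux_gates_def)
  then have "fsubst f' R' = fsubst f (if final_val n C u a then V else W)"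
    unfolding f_def f'_def
  proof (simp only:, intro readback_mux_gates)
    show "a \<in> ran L" using am_if by (auto intro: ranI)
    show "set (leaves V) \<union> set (leaves W) \<subseteq> dom L" using am_if fo_ext_leaves by blast
  qed (use am_if in simp_all)
  moreover have "fsubst f R = If (bconst (final_val n C u a)) (fsubst f V) (fsubst f W)"
    using am_if by (simp add: f_def)
  ultimately have "redex (fsubst f R) (fsubst f' R')"
    using redex_If_bconst by (metis if_distrib)
  then show ?thesis by blast
qed simp

theorem lemma1:
  fixes n k m :: nat and M N :: tm and C C' :: "gate list" and L L' :: "nat \<rightharpoonup> nat"
    and kd :: step_kind and u :: "nat \<Rightarrow> bool"
  assumes "is_machine n k m M C L"
    and "am_step n (M, C, L) kd (N, C', L')"
  shows "(kd = ConstElim \<and> readback n C L M u = readback n C' L' N u)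
         \<or> step (readback n C L M u) (readback n C' L' N u)
         \<or> has_err N"
proof -
  obtain E R R' where M: "M = plug E R" and N: "N = plug E R'"
    and red: "am_redex n (R, C, L) kd (R', C', L')"
    using assms(2) by cases auto
  define f where "f = read_fvar L (final_val n C u)"
  define f' where "f' = read_fvar L' (final_val n C' u)"
  have "set (cleaves E) \<subseteq> dom L"
    using assms(1) by (auto simp: is_machine_def fvs_def M set_leaves_plug)
  then have "cfsubst f' E = cfsubst f E"
    unfolding f_def f'_def by (intro cfsubst_cong am_redex_read_fvar[OF red]) blast
  then have "readback n C L M u = plug (cfsubst f E) (fsubst f R)"
    and "readback n C' L' N u = plug (cfsubst f E) (fsubst f' R')"
    by (simp_all add: readback_eq_fsubst fsubst_plug M N f_def f'_def)
  with am_redex_readback[OF red, of u] show ?thesis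
    unfolding f_def[symmetric] f'_def[symmetric] N
    by (auto intro: step.intros has_err_plug_Err)
qed

end
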